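(* Let $n \geq 1$. For each $j \in \{0, 1, \ldots, n\}$, let $N_j$ be the number of permutations $w \in S_{2n+1}$ with exactly $n$ descents such that ${\rm exc}(L(w)) = j$. Then $N_0 = N_1 = \cdots = N_n$. As a consequence, the number of Dyck permutations $w \in S_{2n+1}$ equals the Eulerian-Catalan number $EC_n = \frac{1}{n+1} A_{n,2n+1}$.
   Context: $A_{m,n}$ denotes the Eulerian number: the number of permutations of $[n]$ with exactly $m$ descents (a descent of $w = w_1\cdots w_n$ is an index $i$ with $w_i > w_{i+1}$). The Eulerian-Catalan number is $EC_n = \frac{1}{n+1}A_{n,2n+1}$. For a permutation $w = w_1 \cdots w_m$, $L(w)$ is the lattice path starting at $(0,0)$ with $m-1$ steps, the $i$-th step being $(1,0)$ if $w_i < w_{i+1}$ (ascent) and $(0,1)$ if $w_i > w_{i+1}$ (descent). For $w \in S_{2n+1}$ with $n$ descents, $L(w)$ goes from $(0,0)$ to $(n,n)$. For a lattice path $L$ from $(0,0)$ to $(n,n)$ with unit steps $(1,0)$ and $(0,1)$, its exceedance ${\rm exc}(L)$ is the number of $i \in \{0,\ldots,n\}$ such that $L$ contains a point $(i,i')$ with $i < i'$. A permutation $w \in S_{2n+1}$ is a Dyck permutation if $L(w)$ is a lattice path from $(0,0)$ to $(n,n)$ all of whose points satisfy $y \leq x$. *)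

theory Defs
  imports "HOL-Combinatorics.Multiset_Permutations"
begin

text \<open>Permutations of [m] = {1..m} are represented in one-line notation as lists
  w = [w_1, ..., w_m] (list index i corresponds to position i+1).\<close>

definition perms :: "nat \<Rightarrow> nat list set" where
  "perms m = permutations_of_set {1..m}"

definition des :: "nat list \<Rightarrow> nat" where
  "des w = card {i. Suc i < length w \<and> w ! i > w ! Suc i}"

definition eulerian :: "nat \<Rightarrow> nat \<Rightarrow> nat" where
  "eulerian m n = card {w \<in> perms n. des w = m}"

text \<open>A lattice path with unit steps is a list of steps; True = (1,0), False = (0,1).\<close>
definition lpath :: "nat list \<Rightarrow> bool list" where
  "lpath w = map (\<lambda>i. w ! i < w ! Suc i) [0..<length w - 1]"

definition path_points :: "bool list \<Rightarrow> (nat \<times> nat) set" where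
  "path_points s = {(length (filter id (take k s)), length (filter Not (take k s))) | k. k \<le> length s}"

definition exc :: "nat \<Rightarrow> bool list \<Rightarrow> nat" where
  "exc n s = card {i \<in> {0..n}. \<exists>i'. (i, i') \<in> path_points s \<and> i < i'}"

definition dyck_perm :: "nat \<Rightarrow> nat list \<Rightarrow> bool" where
  "dyck_perm n w \<longleftrightarrow> w \<in> perms (2*n+1) \<and> des w = n \<and>
     (\<forall>(x, y) \<in> path_points (lpath w). y \<le> x)"

definition N :: "nat \<Rightarrow> nat \<Rightarrow> nat" where
  "N n j = card {w \<in> perms (2*n+1). des w = n \<and> exc n (lpath w) = j}"

end

theory Submission
  imports Defs
begin

text \<open>Close the ascent/descent word of a permutation \<open>w\<close> of \<open>[2n+1]\<close> into a cyclic word of length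
  \<open>2n+1\<close> by adding the step from its last entry back to its first. Rotating \<open>w\<close> rotates this word,
  and the lattice path of a rotation is the cyclic word cut open at one step. If \<open>w\<close> has \<open>n\<close>
  descents, the cyclic word has \<open>n+1\<close> steps of the type \<open>t\<close> of its closing step, and a rotation has
  \<open>n\<close> descents exactly when it is cut at one of these \<open>n+1\<close> steps. By a cycle-lemma argument with
  the cyclic height function \<open>y - x\<close>, the exceedance of the path cut at such a step equals the
  number of type-\<open>t\<close> steps lying higher (ties broken by position). So every rotation class meets
  each level set \<open>exc = j\<close>, \<open>0 \<le> j \<le> n\<close>, exactly once: all \<open>N n j\<close> equal the number of rotation
  classes, and the Dyck permutations form the level set \<open>j = 0\<close>.\<close>

section \<open>Ranks and rotations of lists\<close>

lemma bij_betw_rank: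
  assumes "finite V"
    and irrefl: "\<And>a. a \<in> V \<Longrightarrow> \<not> R a a"
    and trans: "\<And>a b c. \<lbrakk>a \<in> V; b \<in> V; c \<in> V; R a b; R b c\<rbrakk> \<Longrightarrow> R a c"
    and total: "\<And>a b. \<lbrakk>a \<in> V; b \<in> V; a \<noteq> b\<rbrakk> \<Longrightarrow> R a b \<or> R b a"
  shows "bij_betw (\<lambda>r. card {j \<in> V. R j r}) V {..<card V}"
proof -
  let ?rank = "\<lambda>r. card {j \<in> V. R j r}"
  have less: "?rank b < ?rank a" if "a \<in> V" "b \<in> V" "R b a" for a b
  proof -
    have "insert b {j \<in> V. R j b} \<subseteq> {j \<in> V. R j a}"
      using that trans by blast
    moreover have "b \<notin> {j \<in> V. R j b}" using irrefl by blast
    ultimately show ?thesis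
      using \<open>finite V\<close> card_mono[of "{j \<in> V. R j a}" "insert b {j \<in> V. R j b}"] by simp
  qed
  have inj: "inj_on ?rank V"
  proof (rule inj_onI, rule ccontr)
    fix a b assume "a \<in> V" "b \<in> V" "?rank a = ?rank b" "a \<noteq> b"
    then show False using total[of a b] less[of a b] less[of b a] by auto
  qed
  have "?rank ` V \<subseteq> {..<card V}"
  proof
    fix x assume "x \<in> ?rank ` V"
    then obtain r where "r \<in> V" "x = ?rank r" by blast
    moreover have "{j \<in> V. R j r} \<subseteq> V - {r}" using irrefl by blast
    ultimately have "x \<le> card (V - {r})"
      using \<open>finite V\<close> card_mono by blast
    then show "x \<in> {..<card V}"
      using \<open>r \<in> V\<close> \<open>finite V\<close> card_Diff1_less[of V r] by simp
  qed
  then have "?rank ` V = {..<card V}"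
    using card_image[OF inj] by (intro card_subset_eq) auto
  then show ?thesis using inj by (simp add: bij_betw_def)
qed

declare rotate_Suc [simp del]

lemma mod_add_left_inj:
  fixes a x y m :: nat
  assumes "x < m" "y < m" "(a + x) mod m = (a + y) mod m"
  shows "x = y"
proof -
  have "x = y" if "x \<le> y" "y < m" "(a + x) mod m = (a + y) mod m" for x y
  proof -
    have "m dvd (a + y) - (a + x)"
      using mod_eq_dvd_iff_nat[of "a + x" "a + y" m] that by simp
    then show "x = y" using that nat_dvd_not_less[of "y - x" m] by fastforce
  qed
  then show ?thesis using assms by (metis nat_le_linear)
qed

lemma card_rotated_indices:
  assumes "r < m" "\<not> Q r"
  shows "card {i. i < m - 1 \<and> Q ((Suc r + i) mod m)} = card {j. j < m \<and> Q j}"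
proof -
  define f where "f i = (Suc r + i) mod m" for i
  have inj: "inj_on f {..<m}"
    unfolding f_def by (rule inj_onI) (rule mod_add_left_inj[of _ _ _ "Suc r"], auto)
  have "f ` {..<m} = {..<m}"
    using inj assms(1) by (intro endo_inj_surj) (auto simp: f_def)
  moreover have "f (m - 1) = r"
    using assms(1) by (simp add: f_def)
  moreover have "{..<m - 1} = {..<m} - {m - 1}"
    using assms(1) by auto
  ultimately have img: "f ` {..<m - 1} = {..<m} - {r}"
    using inj_on_image_set_diff[OF inj, of "{..<m}" "{m - 1}"] assms(1) by simp
  have "inj_on f {i. i < m - 1 \<and> Q (f i)}"
    by (rule inj_on_subset[OF inj]) auto
  then have "card {i. i < m - 1 \<and> Q (f i)} = card (f ` {i. i < m - 1 \<and> Q (f i)})"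
    by (rule card_image[symmetric])
  also have "f ` {i. i < m - 1 \<and> Q (f i)} = {j \<in> f ` {..<m - 1}. Q j}"
    by blast
  also have "\<dots> = {j. j < m \<and> Q j}"
    using img assms(2) by auto
  finally show ?thesis by (simp add: f_def)
qed

lemma last_rotate:
  "xs \<noteq> [] \<Longrightarrow> last (rotate k xs) = xs ! ((k + (length xs - 1)) mod length xs)"
  by (simp add: last_conv_nth nth_rotate)

lemma last_rotate_Suc:
  assumes "r < length xs"
  shows "last (rotate (Suc r) xs) = xs ! r"
proof -
  have "xs \<noteq> []" "Suc r + (length xs - 1) = r + length xs" using assms by auto
  then show ?thesis using last_rotate[of xs "Suc r"] assms by simp
qed

lemma rotate_eq_rotate_Suc_last_index:
  "rotate k xs = rotate (Suc ((k + (length xs - 1)) mod length xs)) xs"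
proof (cases "xs = []")
  case False
  then have "Suc (k + (length xs - 1)) = k + length xs" by simp
  then have "Suc ((k + (length xs - 1)) mod length xs) mod length xs = k mod length xs"
    by (metis mod_Suc_eq mod_add_self2)
  then show ?thesis by (metis rotate_conv_mod)
qed simp

lemma length_filter_rotate: "length (filter p (rotate k xs)) = length (filter p xs)"
proof -
  have "length (filter p xs) = length (filter p (drop (k mod length xs) xs))
      + length (filter p (take (k mod length xs) xs))"
    by (metis add.commute append_take_drop_id filter_append length_append)
  then show ?thesis by (simp add: rotate_drop_take)
qed

lemma filter_eq_bool: "filter ((=) t) xs = (if t then filter id xs else filter Not xs)"
  by (cases t) (auto intro: filter_cong)

lemma butlast_rotate_balanced_iff:
  assumes "length c = Suc (2*n)" "length (filter ((=) t) c) = Suc n"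
  shows "length (filter Not (butlast (rotate k c))) = n \<longleftrightarrow> last (rotate k c) = t"
proof -
  define B where "B = butlast (rotate k c)"
  define l where "l = last (rotate k c)"
  have "rotate k c \<noteq> []" using assms(1) by auto
  then have "rotate k c = B @ [l]" by (simp add: B_def l_def)
  then have "length (filter ((=) t) B) + (if l = t then 1 else 0) = Suc n"
    using assms(2) length_filter_rotate[of "(=) t" k c] by (cases "l = t") auto
  moreover have "length (filter id B) + length (filter Not B) = 2*n"
    using sum_length_filter_compl[of id B] assms(1) by (simp add: B_def)
  ultimately show ?thesis unfolding B_def[symmetric] l_def[symmetric] filter_eq_bool
    by (cases t; cases "l = t") auto
qed

definition rotations :: "'a list \<Rightarrow> 'a list set" where
  "rotations w = range (\<lambda>k. rotate k w)"

lemma self_in_rotations: "w \<in> rotations w"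
  unfolding rotations_def by (metis rangeI rotate0 id_apply)

lemma rotations_eq:
  assumes "v \<in> rotations w"
  shows "rotations v = rotations w"
proof -
  obtain m where v: "v = rotate m w" using assms by (auto simp: rotations_def)
  have "rotate k w \<in> rotations v" for k
  proof -
    have "rotate k w = rotate ((length w - 1) * m + k) v"
    proof (cases "w = []")
      case False
      then have "(length w - 1) * m + k + m = length w * m + k"
        by (cases "length w") auto
      then have "rotate ((length w - 1) * m + k) v = rotate (length w * m + k) w"
        unfolding v by (metis rotate_rotate)
      also have "\<dots> = rotate ((length w * m + k) mod length w) w"
        by (rule rotate_conv_mod)
      also have "\<dots> = rotate k w"
        by (simp add: rotate_conv_mod[symmetric])
      finally show ?thesis by simp
    qed (simp add: v)
    then show ?thesis unfolding rotations_def by blast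
  qed
  then show ?thesis unfolding rotations_def v by (auto simp: rotate_rotate)
qed

section \<open>Lattice paths and exceedance\<close>

definition path_x :: "bool list \<Rightarrow> nat \<Rightarrow> nat" where
  "path_x P k = length (filter id (take k P))"

definition path_y :: "bool list \<Rightarrow> nat \<Rightarrow> nat" where
  "path_y P k = length (filter Not (take k P))"

lemma path_points_eq: "path_points P = {(path_x P k, path_y P k) | k. k \<le> length P}"
  unfolding path_points_def path_x_def path_y_def by simp

lemma length_filter_take_mono:
  assumes "k \<le> j"
  shows "length (filter p (take k xs)) \<le> length (filter p (take j xs))"
proof -
  have "take j xs = take k xs @ take (j - k) (drop k xs)"
    using assms by (metis le_add_diff_inverse take_add)
  then show ?thesis by simp
qed

lemma path_x_mono: "k \<le> j \<Longrightarrow> path_x P k \<le> path_x P j"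
  unfolding path_x_def by (rule length_filter_take_mono)

lemma path_y_mono: "k \<le> j \<Longrightarrow> path_y P k \<le> path_y P j"
  unfolding path_y_def by (rule length_filter_take_mono)

lemma path_x_Suc: "k < length P \<Longrightarrow> path_x P (Suc k) = path_x P k + (if P ! k then 1 else 0)"
  unfolding path_x_def by (simp add: take_Suc_conv_app_nth)

lemma path_y_Suc: "k < length P \<Longrightarrow> path_y P (Suc k) = path_y P k + (if P ! k then 0 else 1)"
  unfolding path_y_def by (simp add: take_Suc_conv_app_nth)

lemma path_x_length [simp]: "path_x P (length P) = length (filter id P)"
  by (simp add: path_x_def)

lemma path_y_length [simp]: "path_y P (length P) = length (filter Not P)"
  by (simp add: path_y_def)

lemma path_x_append: "k \<le> length P \<Longrightarrow> path_x (P @ Q) k = path_x P k"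
  by (simp add: path_x_def)

lemma path_y_append: "k \<le> length P \<Longrightarrow> path_y (P @ Q) k = path_y P k"
  by (simp add: path_y_def)

lemma path_x_increase_east_step:
  assumes "k \<le> j" "j \<le> length P" "path_x P k < path_x P j"
  shows "\<exists>p. k \<le> p \<and> p < j \<and> P ! p \<and> path_x P p = path_x P k \<and> path_y P k \<le> path_y P p"
  using assms
proof (induction j)
  case 0
  then show ?case by simp
next
  case (Suc j)
  show ?case
  proof (cases "k = Suc j")
    case True
    then show ?thesis using Suc by simp
  next
    case False
    then have kj: "k \<le> j" using Suc by simp
    show ?thesis
    proof (cases "path_x P k < path_x P j")
      case True
      then show ?thesis using Suc kj by fastforce
    next
      case False
      then have same: "path_x P k = path_x P j" using path_x_mono[OF kj, of P] by simp
      then have "P ! j" using Suc path_x_Suc[of j P] by (auto split: if_splits)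
      then show ?thesis using same path_y_mono[OF kj, of P] kj by (intro exI[of _ j]) auto
    qed
  qed
qed

text \<open>The path leaves column \<open>i < n\<close> by a unique east step, which starts at the top of the
  column; so the column contains a point above the diagonal iff that step starts above it.\<close>

lemma exc_eq_card_east_steps_above:
  assumes "length (filter id P) = n" "length (filter Not P) = n"
  shows "exc n P = card {k. k < length P \<and> P ! k \<and> path_x P k < path_y P k}"
proof -
  let ?X = "{i \<in> {0..n}. \<exists>i'. (i, i') \<in> path_points P \<and> i < i'}"
  let ?E = "{k. k < length P \<and> P ! k \<and> path_x P k < path_y P k}"
  have inj: "inj_on (path_x P) ?E"
  proof (rule inj_onI)
    have *: "path_x P x \<noteq> path_x P y" if "x \<in> ?E" "x < y" for x y
      using that path_x_Suc[of x P] path_x_mono[of "Suc x" y P] by simp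
    fix x y assume "x \<in> ?E" "y \<in> ?E" "path_x P x = path_x P y"
    then show "x = y" using *[of x y] *[of y x] by (metis linorder_neqE_nat)
  qed
  have "path_x P ` ?E = ?X"
  proof
    show "path_x P ` ?E \<subseteq> ?X"
    proof
      fix a assume "a \<in> path_x P ` ?E"
      then obtain k where k: "k \<in> ?E" "a = path_x P k" by blast
      have "a \<le> n" using k path_x_mono[of k "length P" P] assms by simp
      moreover have "(a, path_y P k) \<in> path_points P" using k by (auto simp: path_points_eq)
      ultimately show "a \<in> ?X" using k by auto
    qed
  next
    show "?X \<subseteq> path_x P ` ?E"
    proof
      fix a assume "a \<in> ?X"
      then obtain k where k: "k \<le> length P" "a = path_x P k" "a < path_y P k"
        by (auto simp: path_points_eq)
      then have "path_x P k < path_x P (length P)"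
        using path_y_mono[of k "length P" P] assms by simp
      then obtain p where "k \<le> p" "p < length P" "P ! p" "path_x P p = path_x P k"
          "path_y P k \<le> path_y P p"
        using path_x_increase_east_step[of k "length P" P] k by auto
      then show "a \<in> path_x P ` ?E" using k by (intro image_eqI[of _ _ p]) auto
    qed
  qed
  then show ?thesis unfolding exc_def using card_image[OF inj] by simp
qed

text \<open>Telescoping: the north steps counted raise \<open>max 0 (y - x)\<close> by one, the east steps counted
  lower it by one, and all other steps leave it unchanged.\<close>

lemma north_minus_east_steps_above:
  "int (card {i. i < length P \<and> \<not> P ! i \<and> path_x P i \<le> path_y P i})
     - int (card {i. i < length P \<and> P ! i \<and> path_x P i < path_y P i})
   = max 0 (int (length (filter Not P)) - int (length (filter id P)))"
proof (induction P rule: rev_induct)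
  case Nil
  then show ?case by simp
next
  case (snoc b P)
  let ?l = "length P"
  let ?N = "\<lambda>P. {i. i < length P \<and> \<not> P ! i \<and> path_x P i \<le> path_y P i}"
  let ?E = "\<lambda>P. {i. i < length P \<and> P ! i \<and> path_x P i < path_y P i}"
  have "?N (P @ [b]) = ?N P \<union> (if \<not> b \<and> path_x P ?l \<le> path_y P ?l then {?l} else {})"
    by (auto simp: path_x_append path_y_append nth_append less_Suc_eq)
  then have N: "card (?N (P @ [b]))
      = card (?N P) + (if \<not> b \<and> path_x P ?l \<le> path_y P ?l then 1 else 0)"
    by (auto simp: card_insert_if)
  have "?E (P @ [b]) = ?E P \<union> (if b \<and> path_x P ?l < path_y P ?l then {?l} else {})"
    by (auto simp: path_x_append path_y_append nth_append less_Suc_eq)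
  then have E: "card (?E (P @ [b]))
      = card (?E P) + (if b \<and> path_x P ?l < path_y P ?l then 1 else 0)"
    by (auto simp: card_insert_if)
  have "length (filter id (P @ [b])) = length (filter id P) + (if b then 1 else 0)"
    and "length (filter Not (P @ [b])) = length (filter Not P) + (if b then 0 else 1)"
    by simp_all
  then show ?case
    using snoc.IH unfolding N E path_x_length path_y_length by (cases b) (auto simp: id_def)
qed

lemma exc_eq_card_north_steps_weakly_above:
  assumes "length (filter id P) = n" "length (filter Not P) = n"
  shows "exc n P = card {k. k < length P \<and> \<not> P ! k \<and> path_x P k \<le> path_y P k}"
  using exc_eq_card_east_steps_above[OF assms] north_minus_east_steps_above[of P] assms by simp

lemma exc_eq_0_iff:
  assumes "length (filter id P) = n"
  shows "exc n P = 0 \<longleftrightarrow> (\<forall>(x, y) \<in> path_points P. y \<le> x)"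
proof -
  have "x \<le> n" if "(x, y) \<in> path_points P" for x y
    using that assms path_x_mono[of _ "length P" P] by (auto simp: path_points_eq)
  then show ?thesis unfolding exc_def by fastforce
qed

definition step_height :: "bool \<Rightarrow> int" where
  "step_height b = (if b then -1 else 1)"

lemma path_height:
  "i \<le> length P \<Longrightarrow> int (path_y P i) - int (path_x P i) = (\<Sum>k<i. step_height (P ! k))"
proof (induction i)
  case 0
  then show ?case by (simp add: path_x_def path_y_def)
next
  case (Suc i)
  then show ?case using path_x_Suc[of i P] path_y_Suc[of i P] by (simp add: step_height_def)
qed

section \<open>Cutting a cyclic word open\<close>

definition cyc_height :: "bool list \<Rightarrow> nat \<Rightarrow> int" where
  "cyc_height c j = (\<Sum>k<j. step_height (c ! (k mod length c)))"

lemma cyc_height_add: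
  "cyc_height c (a + i) = cyc_height c a + (\<Sum>k<i. step_height (c ! ((a + k) mod length c)))"
  by (induction i) (auto simp: cyc_height_def)

lemma cyc_height_Suc: "cyc_height c (Suc j) = cyc_height c j + step_height (c ! (j mod length c))"
  by (simp add: cyc_height_def)

lemma cyc_height_period:
  "c \<noteq> [] \<Longrightarrow> cyc_height c (length c + j) = cyc_height c (length c) + cyc_height c j"
  using cyc_height_add[of c "length c" j] by (simp add: cyc_height_def)

lemma cyc_height_length:
  "cyc_height c (length c) = int (length (filter Not c)) - int (length (filter id c))"
proof -
  have "cyc_height c (length c) = (\<Sum>k<length c. step_height (c ! k))"
    unfolding cyc_height_def by (rule sum.cong) auto
  then show ?thesis using path_height[of "length c" c] by simp
qed

text \<open>When the cyclic word is cut open after a step of type \<open>t\<close> at position \<open>r\<close>, the condition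
  \<open>x < y\<close> at an east step (\<open>t\<close>), resp. \<open>x \<le> y\<close> at a north step (\<open>\<not> t\<close>), says that the step is
  higher than \<open>r\<close> in this order; the tie-break reflects the strict versus the weak inequality.\<close>

definition cyc_higher :: "bool \<Rightarrow> bool list \<Rightarrow> nat \<Rightarrow> nat \<Rightarrow> bool" where
  "cyc_higher t c a b \<longleftrightarrow> cyc_height c b < cyc_height c a \<or>
     (cyc_height c a = cyc_height c b \<and> (if t then b < a else a < b))"

lemma cyc_higher_irrefl: "\<not> cyc_higher t c a a"
  by (simp add: cyc_higher_def)

lemma cyc_higher_trans: "cyc_higher t c a b \<Longrightarrow> cyc_higher t c b d \<Longrightarrow> cyc_higher t c a d"
  unfolding cyc_higher_def by (cases t) auto

lemma cyc_higher_total: "a \<noteq> b \<Longrightarrow> cyc_higher t c a b \<or> cyc_higher t c b a"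
  unfolding cyc_higher_def by (cases t) auto

lemma nth_butlast_rotate:
  "i < length c - 1 \<Longrightarrow> butlast (rotate k c) ! i = c ! ((k + i) mod length c)"
  by (simp add: nth_butlast nth_rotate)

lemma path_height_butlast_rotate:
  assumes "i < length c"
  shows "int (path_y (butlast (rotate k c)) i) - int (path_x (butlast (rotate k c)) i)
    = cyc_height c (k + i) - cyc_height c k"
proof -
  have "int (path_y (butlast (rotate k c)) i) - int (path_x (butlast (rotate k c)) i)
      = (\<Sum>j<i. step_height (butlast (rotate k c) ! j))"
    using path_height[of i "butlast (rotate k c)"] assms by simp
  also have "\<dots> = (\<Sum>j<i. step_height (c ! ((k + j) mod length c)))"
    using assms by (intro sum.cong) (auto simp: nth_butlast_rotate)
  finally show ?thesis using cyc_height_add[of c k i] by simp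
qed

lemma cyc_height_length_eq_step_height:
  assumes "length c = Suc (2*n)" "length (filter ((=) t) c) = Suc n"
  shows "cyc_height c (length c) = step_height t"
  using cyc_height_length[of c] assms sum_length_filter_compl[of id c]
  by (auto simp: filter_eq_bool step_height_def)

lemma step_above_diagonal_iff_cyc_higher:
  assumes len: "length c = Suc (2*n)" and cnt: "length (filter ((=) t) c) = Suc n"
    and r: "r < Suc (2*n)" "c ! r = t" and i: "i < 2*n"
  defines "P \<equiv> butlast (rotate (Suc r) c)" and "j \<equiv> (Suc r + i) mod Suc (2*n)"
  shows "(if t then P ! i \<and> path_x P i < path_y P i else \<not> P ! i \<and> path_x P i \<le> path_y P i)
    \<longleftrightarrow> c ! j = t \<and> cyc_higher t c j r"
proof -
  have P_i: "P ! i = c ! j"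
    using i len by (simp add: P_def j_def nth_butlast_rotate)
  have height: "int (path_y P i) - int (path_x P i)
      = cyc_height c (Suc r + i) - cyc_height c r - step_height t"
    using path_height_butlast_rotate[of i c "Suc r"] cyc_height_Suc[of c r] i r len
    by (simp add: P_def)
  show ?thesis
  proof (cases "Suc r + i < Suc (2*n)")
    case True
    then have "j = Suc r + i" "r < j" by (simp_all add: j_def)
    then show ?thesis using height P_i
      unfolding cyc_higher_def by (cases t) (auto simp: step_height_def)
  next
    case False
    then have wrap: "Suc r + i = Suc (2*n) + j" "j < r"
      using i r by (auto simp: j_def le_mod_geq)
    have "c \<noteq> []" using len by (metis length_0_conv nat.distinct(1))
    then have "cyc_height c (Suc r + i) = step_height t + cyc_height c j"
      using cyc_height_period[of c j] cyc_height_length_eq_step_height[OF len cnt] len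
      unfolding wrap by simp
    then show ?thesis using height P_i wrap(2)
      unfolding cyc_higher_def by (cases t) (auto simp: step_height_def)
  qed
qed

lemma exc_butlast_rotate:
  assumes len: "length c = Suc (2*n)" and cnt: "length (filter ((=) t) c) = Suc n"
    and r: "r < Suc (2*n)" "c ! r = t"
  shows "exc n (butlast (rotate (Suc r) c))
    = card {j. j < Suc (2*n) \<and> c ! j = t \<and> cyc_higher t c j r}"
proof -
  define P where "P = butlast (rotate (Suc r) c)"
  have lP: "length P = 2*n" using len by (simp add: P_def)
  have "last (rotate (Suc r) c) = t"
    using last_rotate_Suc[of r c] len r by simp
  then have PF: "length (filter Not P) = n"
    using butlast_rotate_balanced_iff[OF len cnt, of "Suc r"] unfolding P_def by blast
  then have PT: "length (filter id P) = n"
    using sum_length_filter_compl[of id P] lP by simp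
  have "exc n P = card {i. i < 2*n \<and>
      (if t then P ! i \<and> path_x P i < path_y P i else \<not> P ! i \<and> path_x P i \<le> path_y P i)}"
    using exc_eq_card_east_steps_above[OF PT PF] exc_eq_card_north_steps_weakly_above[OF PT PF] lP
    by (cases t) simp_all
  also have "\<dots> = card {i. i < 2*n \<and>
      c ! ((Suc r + i) mod Suc (2*n)) = t \<and> cyc_higher t c ((Suc r + i) mod Suc (2*n)) r}"
    by (intro arg_cong[where f = card] Collect_cong conj_cong refl)
      (rule step_above_diagonal_iff_cyc_higher[OF len cnt r, folded P_def])
  also have "\<dots> = card {j. j < Suc (2*n) \<and> c ! j = t \<and> cyc_higher t c j r}"
    using card_rotated_indices[of r "Suc (2*n)" "\<lambda>j. c ! j = t \<and> cyc_higher t c j r"] r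
    by (simp add: cyc_higher_irrefl)
  finally show ?thesis by (simp add: P_def)
qed

section \<open>Rotations of permutations\<close>

definition cyc_asc :: "nat list \<Rightarrow> bool list" where
  "cyc_asc w = map (\<lambda>i. w ! i < w ! (Suc i mod length w)) [0..<length w]"

lemma length_cyc_asc [simp]: "length (cyc_asc w) = length w"
  by (simp add: cyc_asc_def)

lemma lpath_eq_butlast_cyc_asc: "lpath w = butlast (cyc_asc w)"
  unfolding lpath_def cyc_asc_def by (intro nth_equalityI) (auto simp: nth_butlast)

lemma cyc_asc_rotate: "cyc_asc (rotate k w) = rotate k (cyc_asc w)"
proof (intro nth_equalityI)
  show "length (cyc_asc (rotate k w)) = length (rotate k (cyc_asc w))" by simp
next
  fix i assume "i < length (cyc_asc (rotate k w))"
  then have i: "i < length w" by simp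
  let ?m = "length w"
  have "cyc_asc (rotate k w) ! i = (rotate k w ! i < rotate k w ! (Suc i mod ?m))"
    using i by (simp add: cyc_asc_def)
  also have "\<dots> = (w ! ((k + i) mod ?m) < w ! ((k + Suc i mod ?m) mod ?m))"
  proof -
    have "Suc i mod ?m < ?m" using i by (intro mod_less_divisor) auto
    then show ?thesis using i by (simp add: nth_rotate)
  qed
  also have "(k + Suc i mod ?m) mod ?m = Suc ((k + i) mod ?m) mod ?m"
    by (simp add: mod_simps)
  also have "(w ! ((k + i) mod ?m) < w ! (Suc ((k + i) mod ?m) mod ?m)) = cyc_asc w ! ((k + i) mod ?m)"
  proof -
    have "(k + i) mod ?m < ?m" using i by (intro mod_less_divisor) auto
    then show ?thesis by (simp add: cyc_asc_def del: upt_Suc)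
  qed
  also have "\<dots> = rotate k (cyc_asc w) ! i"
    using i by (simp add: nth_rotate)
  finally show "cyc_asc (rotate k w) ! i = rotate k (cyc_asc w) ! i" .
qed

lemma lpath_rotate: "lpath (rotate k w) = butlast (rotate k (cyc_asc w))"
  by (simp add: lpath_eq_butlast_cyc_asc cyc_asc_rotate)

lemma des_eq_length_filter_Not_lpath:
  assumes "distinct w"
  shows "des w = length (filter Not (lpath w))"
proof -
  have "w ! Suc i < w ! i \<longleftrightarrow> \<not> w ! i < w ! Suc i" if "Suc i < length w" for i
    using assms that nth_eq_iff_index_eq[of w i "Suc i"] by auto
  then have "{i. Suc i < length w \<and> w ! i > w ! Suc i} = {i. i < length (lpath w) \<and> \<not> lpath w ! i}"
    unfolding lpath_def by (auto simp: less_diff_conv)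
  then show ?thesis unfolding des_def by (simp add: length_filter_conv_card)
qed

lemma perms_iff: "w \<in> perms m \<longleftrightarrow> distinct w \<and> set w = {1..m}"
  unfolding perms_def permutations_of_set_def by auto

lemma length_perms: "w \<in> perms m \<Longrightarrow> length w = m"
  unfolding perms_iff using distinct_card[of w] by auto

lemma rotate_perms: "w \<in> perms m \<Longrightarrow> rotate k w \<in> perms m"
  unfolding perms_iff by simp

definition half_des_perms :: "nat \<Rightarrow> nat list set" where
  "half_des_perms n = {w \<in> perms (2*n+1). des w = n}"

lemma rotate_in_half_des_perms_iff:
  assumes "w \<in> perms (2*n+1)"
  shows "rotate k w \<in> half_des_perms n \<longleftrightarrow> length (filter Not (butlast (rotate k (cyc_asc w)))) = n"
proof -
  have "distinct (rotate k w)" using rotate_perms[OF assms] perms_iff by blast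
  then show ?thesis using rotate_perms[OF assms]
    by (simp add: half_des_perms_def des_eq_length_filter_Not_lpath lpath_rotate)
qed

lemma length_cyc_asc_half_des_perms:
  "w \<in> half_des_perms n \<Longrightarrow> length (cyc_asc w) = Suc (2*n)"
  by (simp add: half_des_perms_def length_perms)

lemma length_filter_last_cyc_asc:
  assumes "w \<in> half_des_perms n"
  shows "length (filter ((=) (last (cyc_asc w))) (cyc_asc w)) = Suc n"
proof -
  let ?c = "cyc_asc w"
  have len: "length ?c = Suc (2*n)" using length_cyc_asc_half_des_perms[OF assms] .
  have F: "length (filter Not (butlast ?c)) = n"
    using assms rotate_in_half_des_perms_iff[of w n 0] by (simp add: half_des_perms_def)
  then have T: "length (filter id (butlast ?c)) = n"
    using sum_length_filter_compl[of id "butlast ?c"] len by simp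
  have "?c \<noteq> []" using len by (metis length_0_conv nat.distinct(1))
  then have "length (filter ((=) (last ?c)) ?c)
      = length (filter ((=) (last ?c)) (butlast ?c)) + length (filter ((=) (last ?c)) [last ?c])"
    by (metis append_butlast_last_id filter_append length_append)
  then show ?thesis using F T by (simp add: filter_eq_bool)
qed

lemma rotate_in_half_des_perms_iff_last:
  assumes "w \<in> half_des_perms n"
  shows "rotate k w \<in> half_des_perms n \<longleftrightarrow> last (rotate k (cyc_asc w)) = last (cyc_asc w)"
  using assms rotate_in_half_des_perms_iff[of w n k] length_filter_last_cyc_asc[OF assms]
    butlast_rotate_balanced_iff[OF length_cyc_asc_half_des_perms[OF assms]]
  by (simp add: half_des_perms_def)

lemma rotations_inter_half_des_perms:
  assumes w: "w \<in> half_des_perms n"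
  shows "rotations w \<inter> half_des_perms n
    = (\<lambda>r. rotate (Suc r) w) ` {r. r < Suc (2*n) \<and> cyc_asc w ! r = last (cyc_asc w)}"
    (is "_ = _ ` ?V")
proof
  let ?c = "cyc_asc w"
  have len: "length ?c = Suc (2*n)" using length_cyc_asc_half_des_perms[OF w] .
  show "rotations w \<inter> half_des_perms n \<subseteq> (\<lambda>r. rotate (Suc r) w) ` ?V"
  proof
    fix v assume "v \<in> rotations w \<inter> half_des_perms n"
    then obtain k where v: "v = rotate k w" "rotate k w \<in> half_des_perms n"
      by (auto simp: rotations_def)
    define r where "r = (k + (length ?c - 1)) mod length ?c"
    have "?c \<noteq> []" using len by (metis length_0_conv nat.distinct(1))
    then have "r \<in> ?V"
      using v(2) rotate_in_half_des_perms_iff_last[OF w] last_rotate[of ?c k] len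
      by (simp add: r_def)
    moreover have "v = rotate (Suc r) w"
      using v(1) rotate_eq_rotate_Suc_last_index[of k w] by (simp add: r_def)
    ultimately show "v \<in> (\<lambda>r. rotate (Suc r) w) ` ?V" by blast
  qed
next
  show "(\<lambda>r. rotate (Suc r) w) ` ?V \<subseteq> rotations w \<inter> half_des_perms n"
  proof
    fix v assume "v \<in> (\<lambda>r. rotate (Suc r) w) ` ?V"
    then obtain r where r: "r \<in> ?V" "v = rotate (Suc r) w" by blast
    then have "last (rotate (Suc r) (cyc_asc w)) = last (cyc_asc w)"
      using last_rotate_Suc[of r "cyc_asc w"] length_cyc_asc_half_des_perms[OF w] by simp
    then show "v \<in> rotations w \<inter> half_des_perms n"
      using rotate_in_half_des_perms_iff_last[OF w] r(2) by (simp add: rotations_def)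
  qed
qed

lemma bij_betw_exc_rotations:
  assumes w: "w \<in> half_des_perms n"
  shows "bij_betw (\<lambda>v. exc n (lpath v)) (rotations w \<inter> half_des_perms n) {..n}"
proof -
  define c where "c = cyc_asc w"
  define t where "t = last c"
  define V where "V = {r. r < Suc (2*n) \<and> c ! r = t}"
  define rank where "rank r = card {j \<in> V. cyc_higher t c j r}" for r
  have len: "length c = Suc (2*n)" using length_cyc_asc_half_des_perms[OF w] by (simp add: c_def)
  have cnt: "length (filter ((=) t) c) = Suc n"
    using length_filter_last_cyc_asc[OF w] by (simp add: c_def t_def)
  have "bij_betw rank V {..<card V}"
    unfolding rank_def
    by (rule bij_betw_rank) (simp_all add: V_def cyc_higher_irrefl cyc_higher_total cyc_higher_trans)
  moreover have "card V = Suc n"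
    using cnt len by (simp add: V_def length_filter_conv_card eq_commute)
  moreover have "exc n (lpath (rotate (Suc r) w)) = rank r" if "r \<in> V" for r
    using exc_butlast_rotate[OF len cnt] that by (simp add: lpath_rotate rank_def V_def c_def)
  ultimately have "bij_betw ((\<lambda>v. exc n (lpath v)) \<circ> (\<lambda>r. rotate (Suc r) w)) V {..n}"
    using bij_betw_cong[of V "(\<lambda>v. exc n (lpath v)) \<circ> (\<lambda>r. rotate (Suc r) w)" rank]
    by (simp add: lessThan_Suc_atMost)
  then show ?thesis
    unfolding rotations_inter_half_des_perms[OF w] bij_betw_def
    by (simp add: inj_on_imageI image_comp V_def c_def t_def)
qed

lemma exc_lpath_le:
  assumes "w \<in> half_des_perms n"
  shows "exc n (lpath w) \<le> n"
proof -
  have "w \<in> rotations w \<inter> half_des_perms n" using assms self_in_rotations by blast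
  then show ?thesis using bij_betwE[OF bij_betw_exc_rotations[OF assms]] by (meson atMost_iff)
qed

lemma N_eq_card_rotation_classes:
  assumes "j \<le> n"
  shows "N n j = card (rotations ` half_des_perms n)"
proof -
  let ?S = "half_des_perms n"
  let ?Sj = "{w \<in> ?S. exc n (lpath w) = j}"
  have N_Sj: "N n j = card ?Sj"
    unfolding N_def half_des_perms_def by (rule arg_cong[where f = card]) auto
  have inj: "inj_on rotations ?Sj"
  proof (rule inj_onI)
    fix v w assume v: "v \<in> ?Sj" and w: "w \<in> ?Sj" and eq: "rotations v = rotations w"
    have "v \<in> rotations w \<inter> ?S" "w \<in> rotations w \<inter> ?S"
      using v w self_in_rotations[of v] self_in_rotations[of w] eq by auto
    then show "v = w"
      using bij_betw_exc_rotations[of w n] v w by (auto simp: bij_betw_def inj_on_def)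
  qed
  have img: "rotations ` ?Sj = rotations ` ?S"
  proof
    show "rotations ` ?S \<subseteq> rotations ` ?Sj"
    proof
      fix R assume "R \<in> rotations ` ?S"
      then obtain w where w: "w \<in> ?S" "R = rotations w" by blast
      then obtain v where v: "v \<in> rotations w \<inter> ?S" "exc n (lpath v) = j"
        using bij_betw_exc_rotations[OF w(1)] assms by (force simp: bij_betw_def)
      then have "rotations v = R"
        using w(2) rotations_eq by blast
      then show "R \<in> rotations ` ?Sj" using v by blast
    qed
  qed auto
  show ?thesis using N_Sj card_image[OF inj] img by simp
qed

lemma card_half_des_perms_eq_sum_N: "card (half_des_perms n) = (\<Sum>j\<le>n. N n j)"
proof -
  let ?Sj = "\<lambda>j. {w \<in> half_des_perms n. exc n (lpath w) = j}"
  have fin: "finite (half_des_perms n)"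
    by (simp add: half_des_perms_def perms_def)
  have "half_des_perms n = (\<Union>j\<le>n. ?Sj j)"
    using exc_lpath_le by blast
  also have "card \<dots> = (\<Sum>j\<le>n. card (?Sj j))"
    by (rule card_UN_disjoint) (use fin in auto)
  finally have "card (half_des_perms n) = (\<Sum>j\<le>n. card (?Sj j))" .
  then show ?thesis unfolding N_def half_des_perms_def by (simp add: conj_assoc)
qed

lemma dyck_perm_iff: "dyck_perm n w \<longleftrightarrow> w \<in> half_des_perms n \<and> exc n (lpath w) = 0"
proof (cases "w \<in> half_des_perms n")
  case True
  then have w: "w \<in> perms (2*n+1)" "des w = n" by (simp_all add: half_des_perms_def)
  then have "length (lpath w) = 2*n" by (simp add: length_perms lpath_def)
  moreover have "length (filter Not (lpath w)) = n"
    using w des_eq_length_filter_Not_lpath perms_iff by metis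
  ultimately have "length (filter id (lpath w)) = n"
    using sum_length_filter_compl[of id "lpath w"] by simp
  then show ?thesis
    using True exc_eq_0_iff[of "lpath w" n] by (simp add: dyck_perm_def half_des_perms_def)
qed (auto simp: dyck_perm_def half_des_perms_def)

theorem mainTheorem1:
  fixes n :: nat
  assumes "n \<ge> 1"
  shows "(\<forall>j \<in> {0..n}. N n j = N n 0) \<and>
         real (card {w. dyck_perm n w}) = real (eulerian n (2*n+1)) / real (n + 1)"
proof -
  define C where "C = card (rotations ` half_des_perms n)"
  have N_eq_C: "N n j = C" if "j \<le> n" for j
    using N_eq_card_rotation_classes[OF that] by (simp add: C_def)
  have "eulerian n (2*n+1) = (\<Sum>j\<le>n. N n j)"
    using card_half_des_perms_eq_sum_N by (simp add: eulerian_def half_des_perms_def)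
  also have "\<dots> = (n + 1) * C"
    using N_eq_C by simp
  finally have eulerian: "eulerian n (2*n+1) = (n + 1) * C" .
  have "{w. dyck_perm n w} = {w \<in> perms (2*n+1). des w = n \<and> exc n (lpath w) = 0}"
    by (auto simp: dyck_perm_iff half_des_perms_def)
  then have "card {w. dyck_perm n w} = C"
    using N_eq_C[of 0] by (simp add: N_def)
  moreover have "real (eulerian n (2*n+1)) / real (n + 1) = real C"
    unfolding eulerian of_nat_mult by (rule nonzero_mult_div_cancel_left) simp
  ultimately show ?thesis using N_eq_C by simp
qed

end
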